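(* Let $(X,* )$ be a proto unital shelf or an idempotent semi-group, and let $a,b\in X$. Then $a*b=b*a$ if and only if $a*b*a=b*a*b$.
   Context: A shelf is a set with a binary operation $*$ satisfying $(a*b)*c=(a*c)*(b*c)$ for all $a,b,c$. A proto unital shelf is a shelf satisfying $a*b=b*(a*b)$ and $a*b=(a*b)*b$ for all $a,b$; such shelves are associative. An idempotent semi-group is an associative magma with $a*a=a$ for all $a$. *)

theory Defs
  imports Main
begin

definition shelf :: "('a \<Rightarrow> 'a \<Rightarrow> 'a) \<Rightarrow> bool" where
  "shelf m \<longleftrightarrow> (\<forall>a b c. m (m a b) c = m (m a c) (m b c))"

definition proto_unital_shelf :: "('a \<Rightarrow> 'a \<Rightarrow> 'a) \<Rightarrow> bool" where
  "proto_unital_shelf m \<longleftrightarrow> shelf m \<and>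
     (\<forall>a b. m a b = m b (m a b)) \<and> (\<forall>a b. m a b = m (m a b) b)"

definition idempotent_semigroup :: "('a \<Rightarrow> 'a \<Rightarrow> 'a) \<Rightarrow> bool" where
  "idempotent_semigroup m \<longleftrightarrow>
     (\<forall>a b c. m (m a b) c = m a (m b c)) \<and> (\<forall>a. m a a = a)"

end

theory Submission
  imports Defs
begin

text \<open>In both structures the product is associative. In a proto unital shelf the unit laws
  give \<open>ab = bab\<close> and \<open>ba = aba\<close> outright, so \<open>aba = bab\<close> forces \<open>ab = ba\<close>. In an idempotent
  semigroup, \<open>aba = bab\<close> yields \<open>ab = abab = a(bab) = aba\<close> and symmetrically \<open>ba = bab\<close>.\<close>

lemma proto_unital_shelf_assoc:
  assumes "proto_unital_shelf m"
  shows "m (m a b) c = m a (m b c)"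
proof -
  have shelf: "\<And>x y z. m (m x y) z = m (m x z) (m y z)"
    and absorb_left: "\<And>x y. m y (m x y) = m x y"
    and absorb_right: "\<And>x y. m (m x y) y = m x y"
    using assms by (auto simp: proto_unital_shelf_def shelf_def)
  have "m (m a b) c = m (m a c) (m b c)" by (rule shelf)
  also have "\<dots> = m (m a (m b c)) (m c (m b c))" by (rule shelf)
  also have "\<dots> = m (m a (m b c)) (m b c)" by (simp only: absorb_left)
  also have "\<dots> = m a (m b c)" by (rule absorb_right)
  finally show ?thesis .
qed

lemma proto_unital_shelf_comm_iff:
  assumes "proto_unital_shelf m"
  shows "m a b = m b a \<longleftrightarrow> m (m a b) a = m (m b a) b"
proof -
  have absorb_left: "\<And>x y. m y (m x y) = m x y"
    and absorb_right: "\<And>x y. m (m x y) y = m x y"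
    using assms by (auto simp: proto_unital_shelf_def)
  have assoc: "\<And>x y z. m (m x y) z = m x (m y z)"
    using proto_unital_shelf_assoc[OF assms] .
  have "m (m b a) b = m a b" and "m (m a b) a = m b a"
    by (simp_all only: assoc absorb_left)
  then show ?thesis by metis
qed

lemma idempotent_semigroup_absorb:
  assumes "idempotent_semigroup m" and braid: "m (m a b) a = m (m b a) b"
  shows "m a b = m (m a b) a"
proof -
  have assoc: "\<And>x y z. m (m x y) z = m x (m y z)" and idem: "\<And>x. m x x = x"
    using assms(1) by (auto simp: idempotent_semigroup_def)
  have "m a b = m (m a b) (m a b)" by (rule idem[symmetric])
  also have "\<dots> = m a (m (m b a) b)" by (simp only: assoc)
  also have "\<dots> = m a (m (m a b) a)" by (simp only: braid)
  also have "\<dots> = m (m a a) (m b a)" by (simp only: assoc)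
  also have "\<dots> = m (m a b) a" by (simp only: idem assoc)
  finally show ?thesis .
qed

lemma idempotent_semigroup_comm_iff:
  assumes "idempotent_semigroup m"
  shows "m a b = m b a \<longleftrightarrow> m (m a b) a = m (m b a) b"
proof
  have assoc: "\<And>x y z. m (m x y) z = m x (m y z)" and idem: "\<And>x. m x x = x"
    using assms by (auto simp: idempotent_semigroup_def)
  assume comm: "m a b = m b a"
  have "m (m a b) a = m b a" by (simp only: comm assoc idem)
  moreover have "m (m b a) b = m a b" by (simp only: comm[symmetric] assoc idem)
  ultimately show "m (m a b) a = m (m b a) b" using comm by simp
next
  assume braid: "m (m a b) a = m (m b a) b"
  have "m a b = m (m a b) a"
    using idempotent_semigroup_absorb[OF assms braid] .
  also have "\<dots> = m (m b a) b" by (rule braid)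
  also have "\<dots> = m b a"
    using idempotent_semigroup_absorb[OF assms braid[symmetric]] by (rule sym)
  finally show "m a b = m b a" .
qed

theorem proposition2p1:
  fixes m :: "'a \<Rightarrow> 'a \<Rightarrow> 'a" and a b :: 'a
  assumes "proto_unital_shelf m \<or> idempotent_semigroup m"
  shows "m a b = m b a \<longleftrightarrow> m (m a b) a = m (m b a) b"
  using assms
proof
  assume "proto_unital_shelf m"
  then show ?thesis by (rule proto_unital_shelf_comm_iff)
next
  assume "idempotent_semigroup m"
  then show ?thesis by (rule idempotent_semigroup_comm_iff)
qed

end
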